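(* Let $\mathcal{K}=(\mathcal{R},\mathcal{T})$ be an ME-consistent $\mathcal{ALCP}$ knowledge base over $\mathcal{L}$, $C,D$ concepts and $\kappa\in\mathcal{L}$ with $P^{ME}_{\mathcal{R}}(\kappa)>0$. For every $\mathcal{ALCP}$-model $\mathcal{P}$ of $\mathcal{K}$ there exist pithy $\mathcal{ALCP}$-models $\mathcal{Q}_1,\mathcal{Q}_2$ of $\mathcal{K}$ such that $\Pr_{\mathcal{Q}_1}(C\sqsubseteq D\mid\kappa)\le\Pr_{\mathcal{P}}(C\sqsubseteq D\mid\kappa)\le\Pr_{\mathcal{Q}_2}(C\sqsubseteq D\mid\kappa)$ and $P^{\mathcal{P}}=P^{\mathcal{Q}_1}=P^{\mathcal{Q}_2}$.
   Context: $\mathcal{L}$ is a propositional language over a finite set of variables; $\mathrm{Int}(\mathcal{L})$ is the set of truth assignments. A probability distribution over $\mathcal{L}$ is $P:\mathrm{Int}(\mathcal{L})\to[0,1]$ summing to $1$, with $P(\phi)=\sum_{v\models\phi}P(v)$. A probabilistic constraint is $c_0+\sum_{i=1}^k c_i\,\mathsf{p}(\phi_i)\ge 0$ ($c_i\in\mathbb{R}$, $\phi_i\in\mathcal{L}$), satisfied by $P$ iff $c_0+\sum_ic_iP(\phi_i)\ge0$; $\mathrm{Mod}(\mathcal{R})$ is the set of distributions satisfying all constraints in $\mathcal{R}$; for consistent $\mathcal{R}$, $P^{ME}_{\mathcal{R}}$ is the unique maximizer in $\mathrm{Mod}(\mathcal{R})$ of $H(P)=-\sum_vP(v)\log P(v)$.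 Concepts: $C::=A\mid\neg C\mid C\sqcap C\mid\exists r.C$. An $\mathcal{L}$-GCI is $\langle C\sqsubseteq D:\kappa\rangle$, $\kappa\in\mathcal{L}$; an $\mathcal{L}$-TBox is a finite set of them; a KB is $\mathcal{K}=(\mathcal{R},\mathcal{T})$. A possible world $\mathcal{I}=(\Delta^{\mathcal{I}},\cdot^{\mathcal{I}},v^{\mathcal{I}})$ is a classical $\mathcal{ALC}$ interpretation together with $v^{\mathcal{I}}\in\mathrm{Int}(\mathcal{L})$; it models $\langle C\sqsubseteq D:\kappa\rangle$ iff $v^{\mathcal{I}}\not\models\kappa$ or $C^{\mathcal{I}}\subseteq D^{\mathcal{I}}$. An $\mathcal{ALCP}$-interpretation $\mathcal{P}=(\mathfrak{I},P_{\mathfrak{I}})$ is a nonempty finite set of possible worlds with a probability distribution on it; $P^{\mathcal{P}}(v)=\sum_{\mathcal{I}\in\mathfrak{I},v^{\mathcal{I}}=v}P_{\mathfrak{I}}(\mathcal{I})$. $\mathcal{P}$ is an $\mathcal{ALCP}$-model of $\mathcal{K}$ iff all its worlds model every GCI of $\mathcal{T}$ and $P^{\mathcal{P}}\in\mathrm{Mod}(\mathcal{R})$; it is an ME-$\mathcal{ALCP}$-model if moreover $P^{\mathcal{P}}=P^{ME}_{\mathcal{R}}$; $\mathcal{K}$ is ME-consistent iff an ME-$\mathcal{ALCP}$-model exists. $\mathcal{P}$ is pithy iff for every $w\in\mathrm{Int}(\mathcal{L})$ there is at most one $\mathcal{I}\in\mathfrak{I}$ with $v^{\mathcal{I}}=w$.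 $\Pr_{\mathcal{P}}(C\sqsubseteq D\mid\kappa)=\big(\sum_{\mathcal{I}\in\mathfrak{I},v^{\mathcal{I}}\models\kappa,C^{\mathcal{I}}\subseteq D^{\mathcal{I}}}P_{\mathfrak{I}}(\mathcal{I})\big)/\big(\sum_{\mathcal{I}\in\mathfrak{I},v^{\mathcal{I}}\models\kappa}P_{\mathfrak{I}}(\mathcal{I})\big)$. *)

theory Defs
  imports Complex_Main
begin

datatype 'v pform = PTrue | PFalse | PVar 'v | PNot "'v pform"
  | PAnd "'v pform" "'v pform" | POr "'v pform" "'v pform" | PImp "'v pform" "'v pform"

type_synonym 'v assignment = "'v \<Rightarrow> bool"   \<comment> \<open>Int(L) = UNIV\<close>

fun psat :: "'v assignment \<Rightarrow> 'v pform \<Rightarrow> bool" where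
  "psat v PTrue = True"
| "psat v PFalse = False"
| "psat v (PVar x) = v x"
| "psat v (PNot f) = (\<not> psat v f)"
| "psat v (PAnd f g) = (psat v f \<and> psat v g)"
| "psat v (POr f g) = (psat v f \<or> psat v g)"
| "psat v (PImp f g) = (psat v f \<longrightarrow> psat v g)"

definition is_distribution :: "('v::finite assignment \<Rightarrow> real) \<Rightarrow> bool" where
  "is_distribution P \<longleftrightarrow> (\<forall>v. 0 \<le> P v \<and> P v \<le> 1) \<and> (\<Sum>v\<in>UNIV. P v) = 1"

definition prob :: "('v::finite assignment \<Rightarrow> real) \<Rightarrow> 'v pform \<Rightarrow> real" where
  "prob P \<phi> = (\<Sum>v\<in>{v. psat v \<phi>}. P v)"

text \<open>Probabilistic constraint c0 + sum_i c_i p(phi_i) >= 0, as (c0, [(c1,phi1),...,(ck,phik)]).\<close>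
type_synonym 'v pconstr = "real \<times> (real \<times> 'v pform) list"

definition sat_constr :: "('v::finite assignment \<Rightarrow> real) \<Rightarrow> 'v pconstr \<Rightarrow> bool" where
  "sat_constr P c \<longleftrightarrow> fst c + (\<Sum>(ci, \<phi>i)\<leftarrow>snd c. ci * prob P \<phi>i) \<ge> 0"

definition Mod :: "'v::finite pconstr set \<Rightarrow> ('v assignment \<Rightarrow> real) set" where
  "Mod R = {P. is_distribution P \<and> (\<forall>c\<in>R. sat_constr P c)}"

definition consistent :: "'v::finite pconstr set \<Rightarrow> bool" where
  "consistent R \<longleftrightarrow> Mod R \<noteq> {}"

text \<open>Entropy; note ln 0 = 0 in Isabelle, giving the convention 0 log 0 = 0.\<close>
definition entropy :: "('v::finite assignment \<Rightarrow> real) \<Rightarrow> real" where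
  "entropy P = - (\<Sum>v\<in>UNIV. P v * ln (P v))"

text \<open>The (unique, for consistent R) maximum-entropy distribution.\<close>
definition PME :: "'v::finite pconstr set \<Rightarrow> ('v assignment \<Rightarrow> real)" where
  "PME R = (THE P. P \<in> Mod R \<and> (\<forall>Q\<in>Mod R. entropy Q \<le> entropy P))"

datatype ('c, 'r) concept = Atom 'c | CNot "('c, 'r) concept"
  | CAnd "('c, 'r) concept" "('c, 'r) concept" | CEx 'r "('c, 'r) concept"

record ('d, 'c, 'r, 'v) world =
  wdom :: "'d set"
  wconc :: "'c \<Rightarrow> 'd set"
  wrole :: "'r \<Rightarrow> ('d \<times> 'd) set"
  wval :: "'v assignment"

definition wf_world :: "('d, 'c, 'r, 'v) world \<Rightarrow> bool" where
  "wf_world I \<longleftrightarrow> wdom I \<noteq> {} \<and> (\<forall>A. wconc I A \<subseteq> wdom I)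
     \<and> (\<forall>r. wrole I r \<subseteq> wdom I \<times> wdom I)"

fun ext :: "('d, 'c, 'r, 'v) world \<Rightarrow> ('c, 'r) concept \<Rightarrow> 'd set" where
  "ext I (Atom A) = wconc I A"
| "ext I (CNot C) = wdom I - ext I C"
| "ext I (CAnd C D) = ext I C \<inter> ext I D"
| "ext I (CEx r C) = {x \<in> wdom I. \<exists>y. (x, y) \<in> wrole I r \<and> y \<in> ext I C}"

type_synonym ('c, 'r, 'v) gci = "('c, 'r) concept \<times> ('c, 'r) concept \<times> 'v pform"

definition world_models_gci :: "('d, 'c, 'r, 'v) world \<Rightarrow> ('c, 'r, 'v) gci \<Rightarrow> bool" where
  "world_models_gci I g = (case g of (C, D, \<kappa>) \<Rightarrow>
      \<not> psat (wval I) \<kappa> \<or> ext I C \<subseteq> ext I D)"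

type_synonym ('c, 'r, 'v) kb = "'v pconstr set \<times> ('c, 'r, 'v) gci set"

definition wf_kb :: "('c, 'r, 'v) kb \<Rightarrow> bool" where
  "wf_kb K \<longleftrightarrow> finite (fst K) \<and> finite (snd K)"

type_synonym ('d, 'c, 'r, 'v) alcp =
  "('d, 'c, 'r, 'v) world set \<times> (('d, 'c, 'r, 'v) world \<Rightarrow> real)"

definition is_alcp :: "('d, 'c, 'r, 'v) alcp \<Rightarrow> bool" where
  "is_alcp \<P> \<longleftrightarrow> (case \<P> of (W, PW) \<Rightarrow>
      finite W \<and> W \<noteq> {} \<and> (\<forall>I\<in>W. wf_world I) \<and>
      (\<forall>I\<in>W. 0 \<le> PW I) \<and> (\<Sum>I\<in>W. PW I) = 1)"

definition dist_of :: "('d, 'c, 'r, 'v) alcp \<Rightarrow> ('v assignment \<Rightarrow> real)" where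
  "dist_of \<P> = (\<lambda>v. \<Sum>I\<in>{I \<in> fst \<P>. wval I = v}. snd \<P> I)"

definition alcp_model :: "('d, 'c, 'r, 'v::finite) alcp \<Rightarrow> ('c, 'r, 'v) kb \<Rightarrow> bool" where
  "alcp_model \<P> K \<longleftrightarrow> is_alcp \<P> \<and>
     (\<forall>I\<in>fst \<P>. \<forall>g\<in>snd K. world_models_gci I g) \<and> dist_of \<P> \<in> Mod (fst K)"

definition me_alcp_model :: "('d, 'c, 'r, 'v::finite) alcp \<Rightarrow> ('c, 'r, 'v) kb \<Rightarrow> bool" where
  "me_alcp_model \<P> K \<longleftrightarrow> alcp_model \<P> K \<and> dist_of \<P> = PME (fst K)"

text \<open>ME-consistency (P^ME_R is only defined for consistent R); the domain type 'd is fixed.\<close>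
definition me_consistent :: "'d itself \<Rightarrow> ('c, 'r, 'v::finite) kb \<Rightarrow> bool" where
  "me_consistent _ K \<longleftrightarrow> consistent (fst K) \<and>
     (\<exists>\<P> :: ('d, 'c, 'r, 'v) alcp. me_alcp_model \<P> K)"

definition pithy :: "('d, 'c, 'r, 'v) alcp \<Rightarrow> bool" where
  "pithy \<P> \<longleftrightarrow> (\<forall>I\<in>fst \<P>. \<forall>J\<in>fst \<P>. wval I = wval J \<longrightarrow> I = J)"

definition cond_pr :: "('d, 'c, 'r, 'v) alcp \<Rightarrow> ('c, 'r) concept \<Rightarrow> ('c, 'r) concept
     \<Rightarrow> 'v pform \<Rightarrow> real" where
  "cond_pr \<P> C D \<kappa> =
     (\<Sum>I\<in>{I \<in> fst \<P>. psat (wval I) \<kappa> \<and> ext I C \<subseteq> ext I D}. snd \<P> I) /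
     (\<Sum>I\<in>{I \<in> fst \<P>. psat (wval I) \<kappa>}. snd \<P> I)"

end

theory Submission
  imports Defs
begin

text \<open>Collapse all worlds of \<open>\<P>\<close> sharing a truth assignment \<open>v\<close> into a single representative
  carrying the whole mass \<open>P\<^sup>\<P>(v)\<close>. This keeps the distribution over assignments, hence the
  model property, and yields a pithy interpretation. Choosing the representative among the
  worlds where \<open>C \<sqsubseteq> D\<close> holds (if any) can only increase the conditional probability, and
  choosing it among those where it fails (if any) can only decrease it; the denominator
  \<open>P\<^sup>\<P>(\<kappa>)\<close> depends on the distribution alone.\<close>

definition representative ::
    "('d, 'c, 'r, 'v) world set \<Rightarrow> (('d, 'c, 'r, 'v) world \<Rightarrow> bool) \<Rightarrow> 'v assignment
     \<Rightarrow> ('d, 'c, 'r, 'v) world" where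
  "representative W S v =
     (if \<exists>I\<in>W. wval I = v \<and> S I then SOME I. I \<in> W \<and> wval I = v \<and> S I
      else SOME I. I \<in> W \<and> wval I = v)"

lemma
  assumes "v \<in> wval ` W"
  shows representative_mem: "representative W S v \<in> W"
    and wval_representative: "wval (representative W S v) = v"
    and representative_prefers: "\<exists>I\<in>W. wval I = v \<and> S I \<Longrightarrow> S (representative W S v)"
proof -
  have "representative W S v \<in> W \<and> wval (representative W S v) = v
        \<and> ((\<exists>I\<in>W. wval I = v \<and> S I) \<longrightarrow> S (representative W S v))"
  proof (cases "\<exists>I\<in>W. wval I = v \<and> S I")
    case True
    then have "\<exists>I. I \<in> W \<and> wval I = v \<and> S I" by blast
    from someI_ex[OF this] True show ?thesis unfolding representative_def by simp
  next
    case False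
    from assms have "\<exists>I. I \<in> W \<and> wval I = v" by blast
    from someI_ex[OF this] False show ?thesis unfolding representative_def by auto
  qed
  then show "representative W S v \<in> W" "wval (representative W S v) = v"
    "\<exists>I\<in>W. wval I = v \<and> S I \<Longrightarrow> S (representative W S v)"
    by auto
qed

definition collapse ::
    "('d, 'c, 'r, 'v) alcp \<Rightarrow> (('d, 'c, 'r, 'v) world \<Rightarrow> bool) \<Rightarrow> ('d, 'c, 'r, 'v) alcp" where
  "collapse \<P> S = (representative (fst \<P>) S ` wval ` fst \<P>, \<lambda>I. dist_of \<P> (wval I))"

definition world_mass :: "('d, 'c, 'r, 'v) alcp \<Rightarrow> (('d, 'c, 'r, 'v) world \<Rightarrow> bool) \<Rightarrow> real" where
  "world_mass \<P> G = (\<Sum>I\<in>{I \<in> fst \<P>. G I}. snd \<P> I)"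

lemma cond_pr_world_mass:
  "cond_pr \<P> C D \<kappa> =
     world_mass \<P> (\<lambda>I. psat (wval I) \<kappa> \<and> ext I C \<subseteq> ext I D) / world_mass \<P> (\<lambda>I. psat (wval I) \<kappa>)"
  by (simp add: cond_pr_def world_mass_def)

lemma dist_of_world_mass: "dist_of \<P> v = world_mass \<P> (\<lambda>I. wval I = v)"
  by (simp add: dist_of_def world_mass_def)

lemma world_mass_nonneg: "is_alcp \<P> \<Longrightarrow> 0 \<le> world_mass \<P> G"
  by (auto simp: is_alcp_def world_mass_def intro!: sum_nonneg split: prod.splits)

lemma world_mass_mono:
  assumes "is_alcp \<P>" and "\<And>I. I \<in> fst \<P> \<Longrightarrow> G I \<Longrightarrow> H I"
  shows "world_mass \<P> G \<le> world_mass \<P> H"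
  using assms unfolding world_mass_def is_alcp_def
  by (intro sum_mono2) (auto split: prod.splits)

lemma world_mass_by_wval:
  assumes "finite (fst \<P>)"
  shows "world_mass \<P> G = (\<Sum>v\<in>wval ` fst \<P>. world_mass \<P> (\<lambda>I. G I \<and> wval I = v))"
proof -
  have "world_mass \<P> G =
    (\<Sum>v\<in>wval ` fst \<P>. \<Sum>I\<in>{x. x \<in> {I \<in> fst \<P>. G I} \<and> wval x = v}. snd \<P> I)"
    unfolding world_mass_def by (rule sum.group[symmetric]) (use assms in auto)
  also have "\<dots> = (\<Sum>v\<in>wval ` fst \<P>. world_mass \<P> (\<lambda>I. G I \<and> wval I = v))"
    unfolding world_mass_def by (intro sum.cong) auto
  finally show ?thesis .
qed

lemma world_mass_wval_pred:
  fixes \<P> :: "('d, 'c, 'r, 'v::finite) alcp"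
  assumes "finite (fst \<P>)"
  shows "world_mass \<P> (\<lambda>I. \<phi> (wval I)) = (\<Sum>v | \<phi> v. dist_of \<P> v)"
proof -
  have "world_mass \<P> (\<lambda>I. \<phi> (wval I)) =
    (\<Sum>v | \<phi> v. \<Sum>I\<in>{x. x \<in> {I \<in> fst \<P>. \<phi> (wval I)} \<and> wval x = v}. snd \<P> I)"
    unfolding world_mass_def by (rule sum.group[symmetric]) (use assms in auto)
  also have "\<dots> = (\<Sum>v | \<phi> v. dist_of \<P> v)"
    by (rule sum.cong) (auto simp: dist_of_def intro!: sum.cong)
  finally show ?thesis .
qed

lemma world_mass_wval_pred_cong:
  fixes \<P> \<Q> :: "('d, 'c, 'r, 'v::finite) alcp"
  assumes "finite (fst \<P>)" and "finite (fst \<Q>)" and "dist_of \<Q> = dist_of \<P>"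
  shows "world_mass \<Q> (\<lambda>I. \<phi> (wval I)) = world_mass \<P> (\<lambda>I. \<phi> (wval I))"
  using assms by (simp add: world_mass_wval_pred)

lemma world_mass_collapse:
  assumes "finite (fst \<P>)"
  shows "world_mass (collapse \<P> S) G =
    (\<Sum>v\<in>wval ` fst \<P>. if G (representative (fst \<P>) S v) then dist_of \<P> v else 0)"
proof -
  let ?V = "wval ` fst \<P>" and ?rep = "representative (fst \<P>) S"
  have inj: "inj_on ?rep {v \<in> ?V. G (?rep v)}"
    by (rule inj_onI) (metis (no_types, lifting) mem_Collect_eq wval_representative)
  have "{J \<in> ?rep ` ?V. G J} = ?rep ` {v \<in> ?V. G (?rep v)}" by auto
  then have "world_mass (collapse \<P> S) G = (\<Sum>v\<in>{v \<in> ?V. G (?rep v)}. dist_of \<P> (wval (?rep v)))"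
    by (simp add: world_mass_def collapse_def sum.reindex[OF inj])
  also have "\<dots> = (\<Sum>v\<in>{v \<in> ?V. G (?rep v)}. dist_of \<P> v)"
    by (rule sum.cong) (auto simp: wval_representative)
  finally show ?thesis
    using assms by (simp add: sum.inter_filter)
qed

lemma dist_of_collapse: "dist_of (collapse \<P> S) = dist_of \<P>"
proof
  fix v
  let ?V = "wval ` fst \<P>" and ?rep = "representative (fst \<P>) S"
  have "dist_of (collapse \<P> S) v = (\<Sum>J\<in>?rep ` {u \<in> ?V. u = v}. dist_of \<P> (wval J))"
    unfolding dist_of_def collapse_def
    by (rule sum.cong) (auto simp: wval_representative)
  also have "\<dots> = dist_of \<P> v"
  proof (cases "v \<in> ?V")
    case True
    then have "{u \<in> ?V. u = v} = {v}" by auto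
    then show ?thesis by (simp add: wval_representative True)
  next
    case False
    then have "{u \<in> ?V. u = v} = {}" and "{I \<in> fst \<P>. wval I = v} = {}" by auto
    then show ?thesis by (simp only: dist_of_def image_empty sum.empty)
  qed
  finally show "dist_of (collapse \<P> S) v = dist_of \<P> v" .
qed

lemma pithy_collapse: "pithy (collapse \<P> S)"
  by (auto simp: pithy_def collapse_def wval_representative)

lemma is_alcp_collapse:
  fixes \<P> :: "('d, 'c, 'r, 'v::finite) alcp"
  assumes "is_alcp \<P>"
  shows "is_alcp (collapse \<P> S)"
proof -
  have fin: "finite (fst \<P>)" and ne: "fst \<P> \<noteq> {}" and wf: "\<forall>I\<in>fst \<P>. wf_world I"
    and total: "world_mass \<P> (\<lambda>_. True) = 1"
    using assms by (auto simp: is_alcp_def world_mass_def split: prod.splits)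
  have fin': "finite (fst (collapse \<P> S))" by (simp add: collapse_def fin)
  have "world_mass (collapse \<P> S) (\<lambda>_. True) = world_mass \<P> (\<lambda>_. True)"
    using world_mass_wval_pred_cong[OF fin fin' dist_of_collapse, of "\<lambda>_. True"] by simp
  with total have "(\<Sum>I\<in>fst (collapse \<P> S). snd (collapse \<P> S) I) = 1"
    by (simp add: world_mass_def)
  moreover have "0 \<le> dist_of \<P> v" for v
    using world_mass_nonneg[OF assms] by (simp add: dist_of_world_mass)
  ultimately show ?thesis
    using fin ne wf representative_mem[of _ "fst \<P>" S]
    by (auto simp: is_alcp_def collapse_def)
qed

lemma alcp_model_collapse:
  assumes "alcp_model \<P> K"
  shows "alcp_model (collapse \<P> S) K"
proof -
  have "fst (collapse \<P> S) \<subseteq> fst \<P>"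
    using representative_mem[of _ "fst \<P>" S] by (auto simp: collapse_def)
  then show ?thesis
    using assms is_alcp_collapse[of \<P> S] by (auto simp: alcp_model_def dist_of_collapse)
qed

lemma world_mass_collapse_avoiding_le:
  assumes "is_alcp \<P>"
  shows "world_mass (collapse \<P> (\<lambda>I. \<not> G I)) G \<le> world_mass \<P> G"
proof -
  let ?rep = "representative (fst \<P>) (\<lambda>I. \<not> G I)"
  have fin: "finite (fst \<P>)" using assms by (simp add: is_alcp_def split: prod.splits)
  have "(if G (?rep v) then dist_of \<P> v else 0) \<le> world_mass \<P> (\<lambda>I. G I \<and> wval I = v)"
    if v: "v \<in> wval ` fst \<P>" for v
  proof (cases "G (?rep v)")
    case True
    \<comment> \<open>the representative prefers a world violating \<open>G\<close>, so all worlds over \<open>v\<close> satisfy \<open>G\<close>\<close>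
    then have "\<forall>I\<in>fst \<P>. wval I = v \<longrightarrow> G I"
      using representative_prefers[OF v, of "\<lambda>I. \<not> G I"] by blast
    then show ?thesis
      using True by (simp add: dist_of_world_mass world_mass_mono[OF assms])
  qed (simp add: world_mass_nonneg[OF assms])
  then show ?thesis
    by (simp add: world_mass_collapse[OF fin] world_mass_by_wval[OF fin, of G] sum_mono)
qed

lemma world_mass_collapse_preferring_ge:
  assumes "is_alcp \<P>"
  shows "world_mass \<P> G \<le> world_mass (collapse \<P> G) G"
proof -
  let ?rep = "representative (fst \<P>) G"
  have fin: "finite (fst \<P>)" using assms by (simp add: is_alcp_def split: prod.splits)
  have "world_mass \<P> (\<lambda>I. G I \<and> wval I = v) \<le> (if G (?rep v) then dist_of \<P> v else 0)"
    if v: "v \<in> wval ` fst \<P>" for v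
  proof (cases "G (?rep v)")
    case False
    then have "\<forall>I\<in>fst \<P>. wval I = v \<longrightarrow> \<not> G I"
      using representative_prefers[OF v, of G] by blast
    then have "world_mass \<P> (\<lambda>I. G I \<and> wval I = v) = 0"
      unfolding world_mass_def by (intro sum.neutral) auto
    then show ?thesis using False by simp
  qed (simp add: dist_of_world_mass, rule world_mass_mono[OF assms], simp)
  then show ?thesis
    by (simp add: world_mass_collapse[OF fin] world_mass_by_wval[OF fin, of G] sum_mono)
qed

theorem lemma1:
  fixes K :: "('c, 'r, 'v::finite) kb"
    and C D :: "('c, 'r) concept" and \<kappa> :: "'v pform"
    and \<P> :: "('d, 'c, 'r, 'v) alcp"
  assumes "wf_kb K"
    and "me_consistent TYPE('d) K"
    and "prob (PME (fst K)) \<kappa> > 0"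
    and "alcp_model \<P> K"
  shows "\<exists>(\<Q>1 :: ('d, 'c, 'r, 'v) alcp) (\<Q>2 :: ('d, 'c, 'r, 'v) alcp).
     alcp_model \<Q>1 K \<and> alcp_model \<Q>2 K \<and> pithy \<Q>1 \<and> pithy \<Q>2 \<and>
     cond_pr \<Q>1 C D \<kappa> \<le> cond_pr \<P> C D \<kappa> \<and> cond_pr \<P> C D \<kappa> \<le> cond_pr \<Q>2 C D \<kappa> \<and>
     dist_of \<P> = dist_of \<Q>1 \<and> dist_of \<Q>1 = dist_of \<Q>2"
proof -
  define good where "good I \<longleftrightarrow> psat (wval I) \<kappa> \<and> ext I C \<subseteq> ext I D" for I :: "('d, 'c, 'r, 'v) world"
  define \<Q>1 where "\<Q>1 = collapse \<P> (\<lambda>I. \<not> good I)"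
  define \<Q>2 where "\<Q>2 = collapse \<P> good"
  let ?den = "world_mass \<P> (\<lambda>I. psat (wval I) \<kappa>)"
  have alcp: "is_alcp \<P>" using assms(4) by (simp add: alcp_model_def)
  have models: "alcp_model \<Q>1 K" "alcp_model \<Q>2 K"
    unfolding \<Q>1_def \<Q>2_def using assms(4) by (simp_all add: alcp_model_collapse)
  have cond_pr_collapse: "cond_pr (collapse \<P> S) C D \<kappa> = world_mass (collapse \<P> S) good / ?den" for S
  proof -
    have "finite (fst \<P>)" "finite (fst (collapse \<P> S))"
      using alcp is_alcp_collapse[OF alcp, of S] by (simp_all add: is_alcp_def split: prod.splits)
    then have "world_mass (collapse \<P> S) (\<lambda>I. psat (wval I) \<kappa>) = ?den"
      by (rule world_mass_wval_pred_cong[OF _ _ dist_of_collapse])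
    then show ?thesis
      by (simp add: cond_pr_world_mass good_def[abs_def])
  qed
  have den: "0 \<le> ?den" by (rule world_mass_nonneg[OF alcp])
  have "cond_pr \<Q>1 C D \<kappa> \<le> world_mass \<P> good / ?den"
    unfolding \<Q>1_def cond_pr_collapse
    by (rule divide_right_mono[OF world_mass_collapse_avoiding_le[OF alcp] den])
  moreover have "world_mass \<P> good / ?den \<le> cond_pr \<Q>2 C D \<kappa>"
    unfolding \<Q>2_def cond_pr_collapse
    by (rule divide_right_mono[OF world_mass_collapse_preferring_ge[OF alcp] den])
  moreover have "cond_pr \<P> C D \<kappa> = world_mass \<P> good / ?den"
    by (simp add: cond_pr_world_mass good_def[abs_def])
  ultimately show ?thesis
    using models by (intro exI[of _ \<Q>1] exI[of _ \<Q>2])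
      (simp add: \<Q>1_def \<Q>2_def pithy_collapse dist_of_collapse)
qed

end
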